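(* Let $G$ be a commutative group, $H$ a torsion-free subgroup, $G'=G/H$ and $\varphi:G\to G'$ the natural homomorphism. Let $U\subset G$ be finite and let $\vartheta$ be any of the functionals $\alpha,\alpha',\alpha'',\beta_p$ ($1<p<\infty$), $\beta',\beta''$, where $\vartheta(U)$ is computed in $G$ and $\vartheta(C_\varphi(U))$ is computed in $G'\times\mathbb{Z}$. Then $\vartheta(C_\varphi(U))\le\vartheta(U)$.
   Context: The compression along $\varphi$ maps a finite $A\subset G$ to the finite set $C_\varphi(A)=\bigcup_{x\in\varphi(A)}\{x\}\times\{0,1,\dots,|A\cap\varphi^{-1}(x)|-1\}\subset G'\times\mathbb{Z}$. For a finite set $U$ in a commutative group $K$, with $A,B$ ranging over nonempty finite subsets of $K$: $\alpha(U)=\inf_{A\supset U,B\supset U}\frac{|A+B|}{\sqrt{|A||B|}}$; $\alpha'(U)=\inf_{A\supset U,B\supset U,|A|=|B|}\frac{|A+B|}{|A|}$; $\alpha''(U)=\inf_{A\supset U}\frac{|A+A|}{|A|}$; $\beta_p(U)=\inf_{A,B}\frac{|A+B+U|}{|A|^{1/p}|B|^{1-1/p}}$; $\beta'(U)=\inf_{A,B,|A|=|B|}\frac{|A+B+U|}{\sqrt{|A||B|}}$; $\beta''(U)=\inf_{A}\frac{|A+A+U|}{|A|}$. *)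

theory Defs
  imports Complex_Main "HOL-Library.Product_Plus"
begin

definition sumset :: "'g::ab_group_add set \<Rightarrow> 'g set \<Rightarrow> 'g set" where
  "sumset A B = {a + b | a b. a \<in> A \<and> b \<in> B}"

definition nsmul :: "nat \<Rightarrow> 'g::ab_group_add \<Rightarrow> 'g" where
  "nsmul n x = ((+) x ^^ n) 0"

definition fne :: "'g set \<Rightarrow> bool" where
  "fne A \<longleftrightarrow> finite A \<and> A \<noteq> {}"

definition compression :: "('g \<Rightarrow> 'h) \<Rightarrow> 'g set \<Rightarrow> ('h \<times> int) set" where
  "compression \<phi> A = (\<Union>x\<in>\<phi> ` A. {x} \<times> {0..<int (card (A \<inter> \<phi> -` {x}))})"

definition alpha :: "'g::ab_group_add set \<Rightarrow> real" where
  "alpha U = Inf {real (card (sumset A B)) / sqrt (real (card A) * real (card B)) | A B.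
      fne A \<and> fne B \<and> U \<subseteq> A \<and> U \<subseteq> B}"

definition alpha' :: "'g::ab_group_add set \<Rightarrow> real" where
  "alpha' U = Inf {real (card (sumset A B)) / real (card A) | A B.
      fne A \<and> fne B \<and> U \<subseteq> A \<and> U \<subseteq> B \<and> card A = card B}"

definition alpha'' :: "'g::ab_group_add set \<Rightarrow> real" where
  "alpha'' U = Inf {real (card (sumset A A)) / real (card A) | A. fne A \<and> U \<subseteq> A}"

definition beta :: "real \<Rightarrow> 'g::ab_group_add set \<Rightarrow> real" where
  "beta p U = Inf {real (card (sumset (sumset A B) U)) /
      (real (card A) powr (1 / p) * real (card B) powr (1 - 1 / p)) | A B. fne A \<and> fne B}"

definition beta' :: "'g::ab_group_add set \<Rightarrow> real" where
  "beta' U = Inf {real (card (sumset (sumset A B) U)) / sqrt (real (card A) * real (card B)) | A B.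
      fne A \<and> fne B \<and> card A = card B}"

definition beta'' :: "'g::ab_group_add set \<Rightarrow> real" where
  "beta'' U = Inf {real (card (sumset (sumset A A) U)) / real (card A) | A. fne A}"

end

(*
  The compression of a sumset contains the sumset of the compressions: if the fibres of A over x
  and of B over y have m and n elements, their sumset lies in the fibre of A + B over x + y and
  has at least m + n - 1 elements because the kernel is torsion-free, which is exactly the room
  needed for the points (x + y, i + j) with i < m, j < n.  As the compression C also preserves
  cardinalities and inclusions, every pair (A, B) admissible for one of the functionals at U
  yields the admissible pair (C A, C B) at C U with no larger ratio.

  The bound |X + Y| >= |X| + |Y| - 1 within cosets of the kernel is proved by induction on |Y|
  with Dyson's e-transform.  If no e-transform shrinks Y, then X is stable under translation by
  every difference d of elements of Y; summing over X gives |X| d = 0, so d = 0 and Y is a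
  singleton.
*)
theory Submission
  imports Defs
begin

lemma finite_sumset:
  assumes "finite A" "finite B"
  shows "finite (sumset A B)"
proof -
  have "sumset A B = (\<lambda>(a, b). a + b) ` (A \<times> B)"
    unfolding sumset_def by auto
  then show ?thesis using assms by simp
qed

lemma sumset_mono: "A \<subseteq> A' \<Longrightarrow> B \<subseteq> B' \<Longrightarrow> sumset A B \<subseteq> sumset A' B'"
  unfolding sumset_def by blast

lemma sumset_singleton: "sumset X {y} = (\<lambda>a. a + y) ` X"
  unfolding sumset_def by auto

lemma nsmul_card_eq_sum: "finite X \<Longrightarrow> nsmul (card X) d = (\<Sum>_\<in>X. d)"
  by (induction X rule: finite_induct) (simp_all add: nsmul_def)

lemma nsmul_card_eq_0_if_translate_subset:
  fixes X :: "'g::ab_group_add set"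
  assumes "finite X" and stable: "(\<lambda>a. a + d) ` X \<subseteq> X"
  shows "nsmul (card X) d = 0"
proof -
  have inj: "inj_on (\<lambda>a. a + d) X" by (rule inj_onI) simp
  have X_eq: "(\<lambda>a. a + d) ` X = X"
    using card_subset_eq[OF \<open>finite X\<close> stable] card_image[OF inj] by simp
  have "sum id X = sum id ((\<lambda>a. a + d) ` X)" by (simp only: X_eq)
  also have "\<dots> = sum id X + (\<Sum>_\<in>X. d)"
    by (simp add: sum.reindex[OF inj] sum.distrib)
  finally show ?thesis by (simp add: nsmul_card_eq_sum[OF \<open>finite X\<close>])
qed

lemma sumset_e_transform_subset:
  "sumset (X \<union> (\<lambda>z. z + e) ` Y) {z \<in> Y. z + e \<in> X} \<subseteq> sumset X Y"
proof
  fix s assume "s \<in> sumset (X \<union> (\<lambda>z. z + e) ` Y) {z \<in> Y. z + e \<in> X}"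
  then obtain a b where s: "s = a + b" and a: "a \<in> X \<union> (\<lambda>z. z + e) ` Y"
    and b: "b \<in> Y" "b + e \<in> X"
    unfolding sumset_def by blast
  show "s \<in> sumset X Y"
  proof (cases "a \<in> X")
    case True
    then show ?thesis using s b unfolding sumset_def by blast
  next
    case False
    then obtain z where "z \<in> Y" "a = z + e" using a by blast
    then have "s = (b + e) + z" using s by (simp add: algebra_simps)
    then show ?thesis using \<open>z \<in> Y\<close> b unfolding sumset_def by blast
  qed
qed

lemma card_e_transform:
  fixes X :: "'g::ab_group_add set"
  assumes "finite X" "finite Y"
  shows "card (X \<union> (\<lambda>z. z + e) ` Y) + card {z \<in> Y. z + e \<in> X} = card X + card Y"
proof -
  have inj: "inj_on (\<lambda>z. z + e) S" for S by (rule inj_onI) simp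
  have "X \<inter> (\<lambda>z. z + e) ` Y = (\<lambda>z. z + e) ` {z \<in> Y. z + e \<in> X}" by auto
  then have "card (X \<inter> (\<lambda>z. z + e) ` Y) = card {z \<in> Y. z + e \<in> X}"
    by (simp add: card_image[OF inj])
  moreover have "card X + card ((\<lambda>z. z + e) ` Y)
      = card (X \<union> (\<lambda>z. z + e) ` Y) + card (X \<inter> (\<lambda>z. z + e) ` Y)"
    using \<open>finite X\<close> \<open>finite Y\<close> by (intro card_Un_Int) auto
  ultimately show ?thesis by (simp add: card_image[OF inj])
qed

lemma mem_compression:
  "(x, i) \<in> compression \<phi> A \<longleftrightarrow> x \<in> \<phi> ` A \<and> 0 \<le> i \<and> i < int (card (A \<inter> \<phi> -` {x}))"
  unfolding compression_def by auto

lemma finite_compression [simp]: "finite A \<Longrightarrow> finite (compression \<phi> A)"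
  unfolding compression_def by auto

lemma card_compression [simp]:
  assumes "finite A"
  shows "card (compression \<phi> A) = card A"
proof -
  have "card (compression \<phi> A) = (\<Sum>x\<in>\<phi> ` A. card ({x} \<times> {0..<int (card (A \<inter> \<phi> -` {x}))}))"
    unfolding compression_def using assms by (intro card_UN_disjoint) auto
  also have "\<dots> = (\<Sum>x\<in>\<phi> ` A. card (A \<inter> \<phi> -` {x}))"
    by (simp add: card_cartesian_product)
  also have "\<dots> = card (\<Union>x\<in>\<phi> ` A. A \<inter> \<phi> -` {x})"
    using assms by (intro card_UN_disjoint[symmetric]) auto
  also have "(\<Union>x\<in>\<phi> ` A. A \<inter> \<phi> -` {x}) = A" by auto
  finally show ?thesis .
qed

lemma compression_mono:
  assumes "finite A" "U \<subseteq> A"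
  shows "compression \<phi> U \<subseteq> compression \<phi> A"
proof
  fix q assume q: "q \<in> compression \<phi> U"
  obtain x i where q_eq: "q = (x, i)" by (cases q)
  have "card (U \<inter> \<phi> -` {x}) \<le> card (A \<inter> \<phi> -` {x})"
    using assms by (intro card_mono) auto
  then show "q \<in> compression \<phi> A" using q assms unfolding q_eq mem_compression by auto
qed

lemma compression_eq_empty_iff [simp]: "finite A \<Longrightarrow> compression \<phi> A = {} \<longleftrightarrow> A = {}"
  by (metis card_0_eq card_compression finite_compression)

lemma Inf_le_Inf_via_map2:
  fixes f :: "'x \<Rightarrow> 'x \<Rightarrow> real" and g :: "'y \<Rightarrow> 'y \<Rightarrow> real"
  assumes "\<exists>A B. P A B"
    and "\<And>A B. P A B \<Longrightarrow> Q (h A) (h B) \<and> g (h A) (h B) \<le> f A B"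
    and "\<And>A B. Q A B \<Longrightarrow> 0 \<le> g A B"
  shows "Inf {g A B | A B. Q A B} \<le> Inf {f A B | A B. P A B}"
  using assms by (intro cInf_mono) (fastforce intro: bdd_belowI)+

lemma Inf_le_Inf_via_map:
  fixes f :: "'x \<Rightarrow> real" and g :: "'y \<Rightarrow> real"
  assumes "\<exists>A. P A"
    and "\<And>A. P A \<Longrightarrow> Q (h A) \<and> g (h A) \<le> f A"
    and "\<And>A. Q A \<Longrightarrow> 0 \<le> g A"
  shows "Inf {g A | A. Q A} \<le> Inf {f A | A. P A}"
  using assms by (intro cInf_mono) (fastforce intro: bdd_belowI)+

locale hom_torsion_free_kernel = additive \<phi>
  for \<phi> :: "'a::ab_group_add \<Rightarrow> 'b::ab_group_add" +
  assumes torsion_free: "\<phi> x = 0 \<Longrightarrow> n \<ge> 1 \<Longrightarrow> nsmul n x = 0 \<Longrightarrow> x = 0"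
begin

lemma kernel_period_eq_0:
  assumes "finite X" "X \<noteq> {}" "(\<lambda>a. a + d) ` X \<subseteq> X" "\<phi> d = 0"
  shows "d = 0"
  using assms nsmul_card_eq_0_if_translate_subset[OF assms(1,3)]
  by (intro torsion_free[of d "card X"]) (auto simp: Suc_le_eq)

lemma fibre_singleton_if_translation_stable:
  assumes "finite X" "X \<noteq> {}" "Y \<subseteq> \<phi> -` {v}" "y0 \<in> Y"
    and stable: "\<forall>x\<in>X. \<forall>y\<in>Y. (\<lambda>z. z + (x - y)) ` Y \<subseteq> X"
  shows "Y = {y0}"
proof -
  have "z - y0 = 0" if "z \<in> Y" for z
  proof (rule kernel_period_eq_0)
    show "(\<lambda>a. a + (z - y0)) ` X \<subseteq> X"
    proof
      fix s assume "s \<in> (\<lambda>a. a + (z - y0)) ` X"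
      then obtain a where "a \<in> X" "s = z + (a - y0)" by (auto simp: algebra_simps)
      then show "s \<in> X" using stable \<open>z \<in> Y\<close> \<open>y0 \<in> Y\<close> by blast
    qed
    show "\<phi> (z - y0) = 0" using \<open>z \<in> Y\<close> assms(3,4) by (auto simp: diff)
  qed (use assms in auto)
  then show ?thesis using \<open>y0 \<in> Y\<close> by (metis eq_iff_diff_eq_0 singleton_iff subset_antisym subsetI)
qed

lemma card_sumset_fibres_ge:
  assumes "finite X" "X \<noteq> {}" "X \<subseteq> \<phi> -` {u}"
    and "finite Y" "Y \<noteq> {}" "Y \<subseteq> \<phi> -` {v}"
  shows "card X + card Y \<le> card (sumset X Y) + 1"
  using assms
proof (induction "card Y" arbitrary: X Y rule: less_induct)
  case less
  show ?case
  proof (cases "\<exists>x\<in>X. \<exists>y\<in>Y. \<not> (\<lambda>z. z + (x - y)) ` Y \<subseteq> X")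
    case True
    then obtain x y where "x \<in> X" "y \<in> Y" and not_sub: "\<not> (\<lambda>z. z + (x - y)) ` Y \<subseteq> X"
      by blast
    define e where "e = x - y"
    define X' where "X' = X \<union> (\<lambda>z. z + e) ` Y"
    define Y' where "Y' = {z \<in> Y. z + e \<in> X}"
    have "y \<in> Y'" using \<open>x \<in> X\<close> \<open>y \<in> Y\<close> by (simp add: Y'_def e_def)
    have "Y' \<subset> Y" using not_sub by (auto simp: Y'_def e_def)
    then have "card Y' < card Y" "finite Y'"
      using \<open>finite Y\<close> by (auto intro: psubset_card_mono finite_subset)
    have "\<phi> (z + e) = u" if "z \<in> Y" for z
    proof -
      have "\<phi> z = v" "\<phi> x = u" "\<phi> y = v" using that \<open>x \<in> X\<close> \<open>y \<in> Y\<close> less.prems by auto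
      then show ?thesis by (simp add: e_def add diff)
    qed
    then have "X' \<subseteq> \<phi> -` {u}" using less.prems by (auto simp: X'_def)
    moreover have "Y' \<subseteq> \<phi> -` {v}" using less.prems by (auto simp: Y'_def)
    moreover have "finite X'" "X' \<noteq> {}" using less.prems by (auto simp: X'_def)
    ultimately have "card X' + card Y' \<le> card (sumset X' Y') + 1"
      using less.hyps[OF \<open>card Y' < card Y\<close>] \<open>finite Y'\<close> \<open>y \<in> Y'\<close> by blast
    moreover have "card (sumset X' Y') \<le> card (sumset X Y)"
      unfolding X'_def Y'_def
      using less.prems by (intro card_mono finite_sumset sumset_e_transform_subset) auto
    ultimately show ?thesis
      using card_e_transform[of X Y e] less.prems by (simp add: X'_def Y'_def)
  next
    case False
    then obtain y0 where "Y = {y0}"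
      using fibre_singleton_if_translation_stable less.prems by (metis ex_in_conv)
    moreover have "inj_on (\<lambda>a. a + y0) X" by (rule inj_onI) simp
    ultimately show ?thesis by (simp add: sumset_singleton card_image)
  qed
qed

lemma sumset_compression_subset:
  assumes "finite A" "finite B"
  shows "sumset (compression \<phi> A) (compression \<phi> B) \<subseteq> compression \<phi> (sumset A B)"
proof
  fix s assume "s \<in> sumset (compression \<phi> A) (compression \<phi> B)"
  then obtain x i y j where s: "s = (x + y, i + j)"
    and "(x, i) \<in> compression \<phi> A" "(y, j) \<in> compression \<phi> B"
    unfolding sumset_def by fastforce
  define Ax By where "Ax = A \<inter> \<phi> -` {x}" and "By = B \<inter> \<phi> -` {y}"
  have i: "x \<in> \<phi> ` A" "0 \<le> i" "i < int (card Ax)"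
    and j: "y \<in> \<phi> ` B" "0 \<le> j" "j < int (card By)"
    using \<open>(x, i) \<in> _\<close> \<open>(y, j) \<in> _\<close> by (simp_all add: mem_compression Ax_def By_def)
  have "card Ax + card By \<le> card (sumset Ax By) + 1"
    using assms i(1) j(1) by (intro card_sumset_fibres_ge[where u = x and v = y]) (auto simp: Ax_def By_def)
  moreover have "sumset Ax By \<subseteq> sumset A B \<inter> \<phi> -` {x + y}"
    by (auto simp: sumset_def Ax_def By_def add)
  then have "card (sumset Ax By) \<le> card (sumset A B \<inter> \<phi> -` {x + y})"
    using assms by (intro card_mono) (auto simp: finite_sumset)
  moreover have "x + y \<in> \<phi> ` sumset A B"
    using i(1) j(1) by (force simp: sumset_def add)
  ultimately show "s \<in> compression \<phi> (sumset A B)"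
    using i j by (simp add: s mem_compression)
qed

lemma card_sumset_compression_le:
  assumes "finite A" "finite B"
  shows "card (sumset (compression \<phi> A) (compression \<phi> B)) \<le> card (sumset A B)"
proof -
  have "card (sumset (compression \<phi> A) (compression \<phi> B)) \<le> card (compression \<phi> (sumset A B))"
    using assms by (intro card_mono sumset_compression_subset finite_compression finite_sumset)
  with assms show ?thesis by (simp add: finite_sumset)
qed

lemma card_sumset_sumset_compression_le:
  assumes "finite A" "finite B" "finite U"
  shows "card (sumset (sumset (compression \<phi> A) (compression \<phi> B)) (compression \<phi> U))
    \<le> card (sumset (sumset A B) U)"
proof -
  have "sumset (sumset (compression \<phi> A) (compression \<phi> B)) (compression \<phi> U)
      \<subseteq> sumset (compression \<phi> (sumset A B)) (compression \<phi> U)"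
    using assms by (intro sumset_mono sumset_compression_subset) auto
  also have "\<dots> \<subseteq> compression \<phi> (sumset (sumset A B) U)"
    using assms by (intro sumset_compression_subset finite_sumset)
  finally have "card (sumset (sumset (compression \<phi> A) (compression \<phi> B)) (compression \<phi> U))
      \<le> card (compression \<phi> (sumset (sumset A B) U))"
    using assms by (intro card_mono finite_compression finite_sumset)
  with assms show ?thesis by (simp add: finite_sumset)
qed

lemma alpha_compression_le:
  assumes "finite U"
  shows "alpha (compression \<phi> U) \<le> alpha U"
  unfolding alpha_def
proof (rule Inf_le_Inf_via_map2[where h = "compression \<phi>"])
  show "\<exists>A B. fne A \<and> fne B \<and> U \<subseteq> A \<and> U \<subseteq> B"
    using assms by (intro exI[of _ "insert 0 U"]) (auto simp: fne_def)
qed (auto simp: compression_mono card_sumset_compression_le fne_def intro!: divide_right_mono)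

lemma alpha'_compression_le:
  assumes "finite U"
  shows "alpha' (compression \<phi> U) \<le> alpha' U"
  unfolding alpha'_def
proof (rule Inf_le_Inf_via_map2[where h = "compression \<phi>"])
  show "\<exists>A B. fne A \<and> fne B \<and> U \<subseteq> A \<and> U \<subseteq> B \<and> card A = card B"
    using assms by (intro exI[of _ "insert 0 U"]) (auto simp: fne_def)
qed (auto simp: compression_mono card_sumset_compression_le fne_def intro!: divide_right_mono)

lemma alpha''_compression_le:
  assumes "finite U"
  shows "alpha'' (compression \<phi> U) \<le> alpha'' U"
  unfolding alpha''_def
proof (rule Inf_le_Inf_via_map[where h = "compression \<phi>"])
  show "\<exists>A. fne A \<and> U \<subseteq> A"
    using assms by (intro exI[of _ "insert 0 U"]) (auto simp: fne_def)
qed (auto simp: compression_mono card_sumset_compression_le fne_def intro!: divide_right_mono)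

lemma beta_compression_le:
  assumes "finite U"
  shows "beta p (compression \<phi> U) \<le> beta p U"
  unfolding beta_def
proof (rule Inf_le_Inf_via_map2[where h = "compression \<phi>"])
  show "\<exists>(A :: 'a set) (B :: 'a set). fne A \<and> fne B"
    by (intro exI[of _ "{0}"]) (simp add: fne_def)
qed (use assms in \<open>auto simp: card_sumset_sumset_compression_le fne_def intro!: divide_right_mono\<close>)

lemma beta'_compression_le:
  assumes "finite U"
  shows "beta' (compression \<phi> U) \<le> beta' U"
  unfolding beta'_def
proof (rule Inf_le_Inf_via_map2[where h = "compression \<phi>"])
  show "\<exists>(A :: 'a set) (B :: 'a set). fne A \<and> fne B \<and> card A = card B"
    by (intro exI[of _ "{0}"]) (simp add: fne_def)
qed (use assms in \<open>auto simp: card_sumset_sumset_compression_le fne_def intro!: divide_right_mono\<close>)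

lemma beta''_compression_le:
  assumes "finite U"
  shows "beta'' (compression \<phi> U) \<le> beta'' U"
  unfolding beta''_def
proof (rule Inf_le_Inf_via_map[where h = "compression \<phi>"])
  show "\<exists>A :: 'a set. fne A"
    by (intro exI[of _ "{0}"]) (simp add: fne_def)
qed (use assms in \<open>auto simp: card_sumset_sumset_compression_le fne_def intro!: divide_right_mono\<close>)

end

theorem mainTheorem6:
  fixes \<phi> :: "'a::ab_group_add \<Rightarrow> 'b::ab_group_add" and U :: "'a set"
  assumes hom: "\<And>x y. \<phi> (x + y) = \<phi> x + \<phi> y"
    and surj: "surj \<phi>"
    and torsion_free: "\<And>x n. \<phi> x = 0 \<Longrightarrow> n \<ge> 1 \<Longrightarrow> nsmul n x = 0 \<Longrightarrow> x = 0"
    and finU: "finite U"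
  shows "alpha (compression \<phi> U) \<le> alpha U
    \<and> alpha' (compression \<phi> U) \<le> alpha' U
    \<and> alpha'' (compression \<phi> U) \<le> alpha'' U
    \<and> (\<forall>p::real. 1 < p \<longrightarrow> beta p (compression \<phi> U) \<le> beta p U)
    \<and> beta' (compression \<phi> U) \<le> beta' U
    \<and> beta'' (compression \<phi> U) \<le> beta'' U"
proof -
  interpret hom_torsion_free_kernel \<phi>
    using hom torsion_free by unfold_locales
  show ?thesis
    using finU by (simp add: alpha_compression_le alpha'_compression_le alpha''_compression_le
      beta_compression_le beta'_compression_le beta''_compression_le)
qed

end
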